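(* We have \[ \lim_{R\to \infty} R^4 \int_0^\infty \frac{\sin^2(\pi R x)}{1 -(Rx)^2}\, \frac{x \tanh(\pi x)}{(R x)^2}\,dx = \frac{\pi^2}{2}\int_0^\infty \frac{\sinh(x)\cosh(x)-x}{x^3\cosh^2(x)}\,dx > 4.20718. \]
   Context: The integrand on the left is understood to be extended continuously at $Rx=1$ (where numerator and denominator both vanish). *)

theory Defs
  imports "HOL-Analysis.Analysis"
begin

text \<open>Integrand on the left. At R x = 1 (and at x = 0) the formula has a vanishing
denominator; the continuous extension there is 0, which coincides with the value
produced by the convention a / 0 = 0.\<close>
definition lhs_integrand :: "real \<Rightarrow> real \<Rightarrow> real" where
  "lhs_integrand R x =
     (sin (pi * R * x))^2 / (1 - (R * x)^2) * (x * tanh (pi * x) / (R * x)^2)"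

definition rhs_integrand :: "real \<Rightarrow> real" where
  "rhs_integrand x = (sinh x * cosh x - x) / (x^3 * (cosh x)^2)"

end

theory Submission
  imports Defs "HOL-Real_Asymp.Real_Asymp"
begin

text \<open>The Mittag-Leffler expansion
  tanh (pi y) = \<Sum>k. 8 y / (pi ((2k+1)^2 + 4 y^2))
turns R^4 times the left integrand into a series whose k-th term, after a partial fraction
decomposition in x, combines the integral of sin(pi R x)^2 / (1 - (R x)^2), which vanishes because
sin(pi u)^2 / u is odd, with the integral of sin(pi R x)^2 / ((2k+1)^2 + 4 x^2), which is
pi / (8 (2k+1)) + O(1/R). Hence the limit is 4 \<Sum>k. 1/(2k+1)^3. Differentiating the expansion of
tanh shows that the right integrand is \<Sum>k. 64 / (pi^2 (2k+1)^2 + 4 x^2)^2, whose integral is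
(8/pi^2) \<Sum>k. 1/(2k+1)^3; a telescoping estimate of the tail of this sum gives the numerical
bound.\<close>

section \<open>Sums over the odd integers\<close>

lemma summable_inverse_odd_sq: "summable (\<lambda>k. 1/(2*real k+1)^2)"
proof (rule summable_comparison_test[OF _ sums_summable[OF inverse_squares_sums]])
  have "1/(2*real n+1)^2 \<le> 1 / real ((n+1)^2)" for n
    by (rule divide_left_mono) (auto simp: power_mono)
  thus "\<exists>N. \<forall>n\<ge>N. norm (1/(2*real n+1)^2) \<le> 1 / real ((n+1)^2)" by auto
qed

lemma summable_inverse_odd_cube: "summable (\<lambda>k. 1/(2*real k+1)^3)"
  by (rule summable_comparison_test[OF _ summable_inverse_odd_sq])
     (auto simp: field_simps power_increasing)

lemma inverse_odd_cube_ge_telescoping: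
  fixes k :: real assumes "k \<ge> 0"
  shows "1/(16*k^2+4) - 1/(16*(k+1)^2+4) \<le> 1/(2*k+1)^3"
proof -
  have p: "16*k^2+4 > 0" "16*(k+1)^2+4 > 0" "2*k+1 > 0" using assms by (auto intro: add_nonneg_pos)
  have "1/(16*k^2+4) - 1/(16*(k+1)^2+4) = 16*(2*k+1)/((16*k^2+4)*(16*(k+1)^2+4))"
    using p by (simp add: field_simps power2_eq_square)
  also have "\<dots> \<le> 1/(2*k+1)^3"
  proof -
    have "16*(2*k+1)*(2*k+1)^3 \<le> (16*k^2+4)*(16*(k+1)^2+4)"
      by (simp add: algebra_simps power2_eq_square power3_eq_cube)
    thus ?thesis using p by (simp add: divide_simps)
  qed
  finally show ?thesis .
qed

text \<open>The first four terms plus the telescoping bound 1/(16 (k+4)^2 + 4) for the tail;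
the true value is 7 zeta(3) / 8 = 1.05179979...\<close>

lemma suminf_inverse_odd_cube_gt: "(\<Sum>k. 1/(2*real k+1)^3) > 1.051795"
proof -
  define f where "f k = 1/(2*real k+1)^3" for k
  define g where "g n = 1/(16*(real n+4)^2+4)" for n
  have sf: "summable f" unfolding f_def by (rule summable_inverse_odd_cube)
  have "g \<longlonglongrightarrow> 0" unfolding g_def by real_asymp
  hence tel: "(\<lambda>n. g n - g (Suc n)) sums (g 0 - 0)"
    by (rule telescope_sums')
  have le: "g n - g (Suc n) \<le> f (n+4)" for n
    using inverse_odd_cube_ge_telescoping[of "real n + 4"]
    by (simp add: f_def g_def add.commute add.left_commute)
  have "g 0 - 0 \<le> (\<Sum>n. f (n+4))"
    using sums_le[OF le tel summable_sums[OF summable_ignore_initial_segment[OF sf, of 4]]] .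
  moreover have "(\<Sum>i<4. f i) + g 0 > 1.051795"
    by (simp add: f_def g_def numeral_eq_Suc)
  ultimately show ?thesis using suminf_split_initial_segment[OF sf, of 4] unfolding f_def by simp
qed

section \<open>Partial fractions of the hyperbolic tangent\<close>

lemma Digamma_reflection:
  fixes z :: complex
  assumes z: "z \<notin> \<int>"
  shows "Digamma (1 - z) - Digamma z = of_real pi * cot (of_real pi * z)"
proof -
  have z1: "z \<notin> \<int>\<^sub>\<le>\<^sub>0" using z nonpos_Ints_subset_Ints by blast
  have z2: "1 - z \<notin> \<int>\<^sub>\<le>\<^sub>0" using z Ints_diff[of 1 "1 - z"] nonpos_Ints_subset_Ints by auto
  have s: "sin (of_real pi * z) \<noteq> 0"
    using z by (auto simp: sin_eq_0 Ints_def)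
  have G: "(\<lambda>z::complex. Gamma z * Gamma (1 - z)) = (\<lambda>z. of_real pi / sin (of_real pi * z))"
    using Gamma_reflection_complex by auto
  have d1: "((\<lambda>z. Gamma z * Gamma (1 - z)) has_field_derivative
      (Gamma z * Digamma z * Gamma (1 - z) - Gamma z * (Gamma (1 - z) * Digamma (1 - z)))) (at z)"
    using z1 z2 by (auto intro!: derivative_eq_intros simp: algebra_simps)
  have d2: "((\<lambda>z. of_real pi / sin (of_real pi * z)) has_field_derivative
      (- (of_real pi * (cos (of_real pi * z) * of_real pi)) / (sin (of_real pi * z))^2)) (at z)"
    using s by (auto intro!: derivative_eq_intros simp: power2_eq_square)
  have eq: "Gamma z * Digamma z * Gamma (1 - z) - Gamma z * (Gamma (1 - z) * Digamma (1 - z))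
      = - (of_real pi * (cos (of_real pi * z) * of_real pi)) / (sin (of_real pi * z))^2"
    using DERIV_unique[OF d1 d2[folded G]] by simp
  have "Gamma z * Gamma (1 - z) * (Digamma z - Digamma (1 - z))
      = of_real pi / sin (of_real pi * z) * (- of_real pi * cot (of_real pi * z))"
    using eq s by (simp add: cot_def field_simps power2_eq_square)
  hence "of_real pi / sin (of_real pi * z) * (Digamma z - Digamma (1 - z))
      = of_real pi / sin (of_real pi * z) * (- of_real pi * cot (of_real pi * z))"
    by (simp add: fun_cong[OF G])
  moreover have "of_real pi / sin (of_real pi * z) \<noteq> 0" using s by simp
  ultimately have "Digamma z - Digamma (1 - z) = - of_real pi * cot (of_real pi * z)"
    by (metis mult_left_cancel)
  thus ?thesis by (simp add: algebra_simps)
qed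

lemma sinh_complex_of_real: "sinh (complex_of_real t) = of_real (sinh t)"
  by (simp add: sinh_def scaleR_conv_of_real flip: exp_of_real)

lemma cosh_complex_of_real: "cosh (complex_of_real t) = of_real (cosh t)"
  by (simp add: cosh_def scaleR_conv_of_real flip: exp_of_real)

lemma cot_pi_half_plus_imaginary:
  "cot (of_real pi * (1/2 + \<i> * of_real y)) = - \<i> * of_real (tanh (pi * y))"
proof -
  define a where "a = complex_of_real (pi/2)"
  define w where "w = \<i> * complex_of_real (pi*y)"
  have ca: "cos a = 0" unfolding a_def by (simp only: cos_of_real cos_pi_half) simp
  have sa: "sin a = 1" unfolding a_def by (simp only: sin_of_real sin_pi_half) simp
  have e: "of_real pi * (1/2 + \<i> * of_real y) = a + w"
    by (simp add: a_def w_def algebra_simps)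
  have sw: "sin w = \<i> * of_real (sinh (pi*y))"
    unfolding w_def by (simp add: sin_conv_sinh sinh_complex_of_real del: of_real_mult)
  have cw: "cos w = of_real (cosh (pi*y))"
    unfolding w_def by (simp add: cos_conv_cosh cosh_complex_of_real del: of_real_mult)
  have "cosh (pi*y) \<noteq> 0" using cosh_real_pos[of "pi*y"] by simp
  thus ?thesis unfolding e cot_def cos_add sin_add ca sa sw cw by (simp add: tanh_def field_simps)
qed

text \<open>The terms are the differences of the series defining Digamma at 1 - z and at z = 1/2 + i y;
by the reflection formula their sum is pi cot (pi z) = -i pi tanh (pi y).\<close>

lemma tanh_pi_partial_fractions:
  fixes y :: real
  shows "(\<lambda>k. 8*y / (pi*((2*real k+1)^2 + 4*y^2))) sums tanh (pi*y)"
proof (cases "y = 0")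
  case True thus ?thesis by simp
next
  case False
  define z where "z = 1/2 + \<i> * complex_of_real y"
  have z: "z \<notin> \<int>"
  proof
    assume "z \<in> \<int>"
    then obtain n where "z = of_int n" by (auto elim: Ints_cases)
    thus False using False by (simp add: z_def complex_eq_iff)
  qed
  have z0: "z \<noteq> 0" "1 - z \<noteq> 0" using z by auto
  have "(\<lambda>n. (inverse (of_nat (Suc n)) - inverse ((1 - z) + of_nat n)) -
             (inverse (of_nat (Suc n)) - inverse (z + of_nat n))) sums (Digamma (1 - z) - Digamma z)"
    using sums_diff[OF summable_sums[OF summable_Digamma[OF z0(2)]]
                       summable_sums[OF summable_Digamma[OF z0(1)]]]
    by (simp add: Digamma_def)
  also have "Digamma (1 - z) - Digamma z = - \<i> * of_real (pi * tanh (pi * y))"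
    using Digamma_reflection[OF z] cot_pi_half_plus_imaginary[of y] by (simp add: z_def)
  also have "(\<lambda>n. (inverse (of_nat (Suc n)) - inverse ((1 - z) + of_nat n)) -
             (inverse (of_nat (Suc n)) - inverse (z + of_nat n)))
        = (\<lambda>n. - \<i> * of_real (pi * (8*y / (pi*((2*real n+1)^2 + 4*y^2)))))"
  proof
    fix n
    define a where "a = real n + 1/2"
    have d: "(1 - z) + of_nat n = Complex a (- y)" "z + of_nat n = Complex a y"
      by (simp_all add: z_def a_def complex_eq_iff)
    have p: "a^2 + y^2 > 0" using False by (simp add: add_nonneg_pos)
    have "(2*real n+1)^2 + 4*y^2 = 4 * (a^2+y^2)"
      by (simp add: a_def power2_eq_square algebra_simps)
    hence "pi * (8*y / (pi*((2*real n+1)^2 + 4*y^2))) = y / (a^2 + y^2) * 2"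
      using p by (simp add: divide_simps)
    moreover have "inverse (Complex a y) - inverse (Complex a (-y)) = - \<i> * of_real (y / (a^2 + y^2) * 2)"
      using p by (simp add: complex_eq_iff power2_eq_square Re_divide Im_divide)
    ultimately show "(inverse (of_nat (Suc n)) - inverse ((1 - z) + of_nat n)) -
             (inverse (of_nat (Suc n)) - inverse (z + of_nat n))
        = - \<i> * of_real (pi * (8*y / (pi*((2*real n+1)^2 + 4*y^2))))"
      unfolding d by simp
  qed
  finally have "(\<lambda>n. complex_of_real (pi * (8*y / (pi*((2*real n+1)^2 + 4*y^2)))))
      sums (of_real (pi * tanh (pi * y)))"
    using sums_mult[of _ _ "\<i>"] by (force simp: algebra_simps)
  hence "(\<lambda>n. inverse pi * (pi * (8*y / (pi*((2*real n+1)^2 + 4*y^2)))))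
      sums (inverse pi * (pi * tanh (pi * y)))"
    unfolding sums_of_real_iff by (rule sums_mult)
  thus ?thesis by (simp add: field_simps)
qed

definition odd_pi :: "nat \<Rightarrow> real" where "odd_pi k = pi * (2*real k+1)"

lemma odd_pi_pos: "odd_pi k > 0"
  by (simp add: odd_pi_def add_pos_nonneg)

lemma odd_pi_sq_plus_pos: "odd_pi k^2 + 4*x^2 > 0"
  using odd_pi_pos[of k] by (intro add_pos_nonneg) auto

lemma tanh_partial_fractions:
  fixes x :: real
  shows "(\<lambda>k. 8*x / (odd_pi k^2 + 4*x^2)) sums tanh x"
proof -
  have "(\<lambda>k. 8*(x/pi) / (pi*((2*real k+1)^2 + 4*(x/pi)^2))) = (\<lambda>k. 8*x / (odd_pi k^2 + 4*x^2))"
  proof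
    fix k
    define Q where "Q = (2*real k+1)^2 + 4*(x/pi)^2"
    have "pi*pi*Q = odd_pi k^2 + 4*x^2"
      unfolding Q_def odd_pi_def by (simp add: power2_eq_square field_simps)
    thus "8*(x/pi) / (pi*((2*real k+1)^2 + 4*(x/pi)^2)) = 8*x / (odd_pi k^2 + 4*x^2)"
      unfolding Q_def[symmetric] by (simp add: mult.assoc)
  qed
  thus ?thesis using tanh_pi_partial_fractions[of "x/pi"] by simp
qed

lemma sech_sq_partial_fractions:
  fixes x :: real
  shows "(\<lambda>k. 8*(odd_pi k^2 - 4*x^2) / (odd_pi k^2 + 4*x^2)^2) sums (1 - tanh x ^ 2)"
proof -
  define f where "f k x = 8*x / (odd_pi k^2 + 4*x^2)" for k and x :: real
  define f' where "f' k x = 8*(odd_pi k^2 - 4*x^2) / (odd_pi k^2 + 4*x^2)^2" for k and x :: real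
  have der: "(f k has_field_derivative f' k x) (at x within UNIV)" for k x
  proof -
    have nz: "odd_pi k^2 + 4*x^2 \<noteq> 0" using odd_pi_sq_plus_pos[of k x] by simp
    show ?thesis unfolding f_def f'_def
      apply (rule DERIV_cong)
       apply (rule derivative_eq_intros refl)+
      using nz apply simp_all
      using nz by (simp add: field_simps power2_eq_square)
  qed
  have maj: "summable (\<lambda>k. 8 / odd_pi k^2)"
    using summable_mult[OF summable_inverse_odd_sq, of "8/pi^2"]
    by (simp add: odd_pi_def power_mult_distrib)
  have bnd: "norm (f' k x) \<le> 8 / odd_pi k^2" for k x
  proof -
    define D where "D = odd_pi k^2 + 4*x^2"
    have D: "D > 0" using odd_pi_sq_plus_pos[of k x] by (simp add: D_def)
    have "\<bar>odd_pi k^2 - 4*x^2\<bar> \<le> D" by (auto simp: D_def abs_le_iff)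
    hence "\<bar>f' k x\<bar> \<le> 8 * D / D^2"
      unfolding f'_def D_def[symmetric] by (simp add: abs_mult divide_right_mono)
    also have "\<dots> = 8 / D" using D by (simp add: power2_eq_square)
    also have "\<dots> \<le> 8 / odd_pi k^2"
      using odd_pi_pos[of k] D unfolding D_def by (intro divide_left_mono mult_pos_pos) auto
    finally show ?thesis by simp
  qed
  have "((\<lambda>x. \<Sum>n. f n x) has_field_derivative (\<Sum>n. f' n x)) (at x)"
    by (rule has_field_derivative_series'(2)[OF convex_UNIV der Weierstrass_m_test'[OF bnd maj],
          of 0]) (auto simp: f_def)
  moreover have "(\<lambda>x. \<Sum>n. f n x) = tanh"
    using tanh_partial_fractions by (auto simp: f_def sums_iff)
  moreover have "(tanh has_field_derivative 1 - tanh x ^ 2) (at x)"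
    using has_field_derivative_tanh[OF _ DERIV_ident, of x] cosh_real_pos[of x] by simp
  ultimately have "(\<Sum>n. f' n x) = 1 - tanh x ^ 2"
    using DERIV_unique by metis
  moreover have "summable (\<lambda>n. f' n x)"
    by (rule summable_comparison_test[OF _ maj]) (use bnd in auto)
  ultimately show ?thesis unfolding f'_def by (simp add: sums_iff)
qed

lemma rhs_integrand_partial_fractions:
  fixes x :: real assumes x: "x > 0"
  shows "(\<lambda>k. 64 / (odd_pi k^2 + 4*x^2)^2) sums rhs_integrand x"
proof -
  have "(\<lambda>k. (8*x / (odd_pi k^2 + 4*x^2) - x * (8*(odd_pi k^2 - 4*x^2) / (odd_pi k^2 + 4*x^2)^2)) / x^3)
        sums ((tanh x - x * (1 - tanh x ^ 2)) / x^3)"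
    by (intro sums_divide sums_diff sums_mult tanh_partial_fractions sech_sq_partial_fractions)
  moreover have "(8*x / (odd_pi k^2 + 4*x^2) - x * (8*(odd_pi k^2 - 4*x^2) / (odd_pi k^2 + 4*x^2)^2)) / x^3
       = 64 / (odd_pi k^2 + 4*x^2)^2" for k
  proof -
    define D where "D = odd_pi k^2 + 4*x^2"
    have D: "D > 0" "odd_pi k^2 = D - 4*x^2" using odd_pi_sq_plus_pos[of k x] by (simp_all add: D_def)
    show ?thesis unfolding D_def[symmetric] D(2) using D(1) x
      by (simp add: field_simps power2_eq_square power3_eq_cube)
  qed
  moreover have "(tanh x - x * (1 - tanh x ^ 2)) / x^3 = rhs_integrand x"
  proof -
    have c: "cosh x \<noteq> 0" using cosh_real_pos[of x] by simp
    hence "1 - tanh x ^ 2 = (cosh x ^ 2 - sinh x ^ 2) / (cosh x)^2"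
      by (simp add: tanh_def field_simps)
    hence e: "1 - tanh x ^ 2 = 1 / (cosh x)^2"
      by (simp add: cosh_square_eq)
    show ?thesis unfolding e rhs_integrand_def using c x
      by (simp add: tanh_def field_simps power2_eq_square)
  qed
  ultimately show ?thesis by simp
qed

section \<open>Elementary improper integrals\<close>

lemma has_integral_Ioi_iff_Ici:
  fixes f :: "real \<Rightarrow> real"
  shows "(f has_integral I) {0<..} \<longleftrightarrow> (f has_integral I) {0..}"
  by (rule has_integral_spike_set_eq; rule negligible_subset[of "{0}"]) auto

lemma has_integral_Ici_FTC_nonneg:
  fixes f F :: "real \<Rightarrow> real"
  assumes D: "\<And>x. x > 0 \<Longrightarrow> (F has_real_derivative f x) (at x)"
    and C: "\<And>x. x > 0 \<Longrightarrow> isCont f x"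
    and N: "\<And>x. x > 0 \<Longrightarrow> f x \<ge> 0"
    and A: "(F \<longlongrightarrow> A) (at_right 0)"
    and B: "(F \<longlongrightarrow> B) at_top"
  shows "(f has_integral (B - A)) {0..}"
proof -
  have e: "einterval (ereal 0) \<infinity> = {0<..}" by (auto simp: einterval_iff)
  have *: "set_integrable lborel (einterval (ereal 0) \<infinity>) f" "(LBINT x=ereal 0..\<infinity>. f x) = B - A"
    by (rule interval_integral_FTC_nonneg[where F=F];
        use D C N A B in \<open>auto simp: ereal_tendsto_simps1\<close>)+
  have si: "set_integrable lborel {0<..} f" using *(1) e by simp
  have "(LBINT x : {0<..}. f x) = B - A"
    using *(2) by (simp add: interval_integral_to_infinity_eq)
  with set_borel_integral_eq_integral[OF si] have "(f has_integral (B - A)) {0<..}"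
    by (metis has_integral_integrable_integral)
  thus ?thesis by (simp add: has_integral_Ioi_iff_Ici)
qed

lemma has_real_derivative_arctan_scaled:
  fixes b x :: real assumes b: "b > 0"
  shows "((\<lambda>x. arctan (2*x/b)) has_real_derivative 2*b/(b^2+4*x^2)) (at x)"
proof -
  have "b^2+4*x^2 > 0" using b by (intro add_pos_nonneg) auto
  hence nz: "b^2+4*x^2 \<noteq> 0" by simp
  show ?thesis
    apply (rule DERIV_cong)
     apply (rule derivative_eq_intros refl)+
    using b nz apply simp_all
    using b nz by (simp add: field_simps power2_eq_square)
qed

lemma has_integral_inverse_sq_plus:
  fixes b :: real assumes b: "b > 0"
  shows "((\<lambda>x. 1/(b^2+4*x^2)) has_integral pi/(4*b)) {0..}"
proof -
  define F where "F x = arctan (2*x/b)/(2*b)" for x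
  have "((\<lambda>x. 1/(b^2+4*x^2)) has_integral (pi * inverse b / 4 - 0)) {0..}"
  proof (rule has_integral_Ici_FTC_nonneg[where F=F])
    fix x :: real assume "x > 0"
    have p: "b^2+4*x^2 > 0" using b by (simp add: add_pos_nonneg)
    show "(F has_real_derivative 1/(b^2+4*x^2)) (at x)"
      unfolding F_def
      by (rule DERIV_cong[OF DERIV_cdivide[OF has_real_derivative_arctan_scaled[OF b]]]) (use b in simp)
    show "isCont (\<lambda>x. 1/(b^2+4*x^2)) x" using p by (auto intro!: continuous_intros)
    show "0 \<le> 1/(b^2+4*x^2)" using p by simp
  next
    show "(F \<longlongrightarrow> 0) (at_right 0)" unfolding F_def using b by real_asymp
    show "(F \<longlongrightarrow> pi * inverse b / 4) at_top" unfolding F_def using b by real_asymp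
  qed
  thus ?thesis by (simp add: field_simps)
qed

lemma has_integral_inverse_sq_plus_squared:
  fixes b :: real assumes b: "b > 0"
  shows "((\<lambda>x. 1/(b^2+4*x^2)^2) has_integral pi/(8*b^3)) {0..}"
proof -
  define F where "F x = x/(2*b^2*(b^2+4*x^2)) + arctan (2*x/b)/(4*b^3)" for x
  have "((\<lambda>x. 1/(b^2+4*x^2)^2) has_integral (pi * inverse (b^3) / 8 - 0)) {0..}"
  proof (rule has_integral_Ici_FTC_nonneg[where F=F])
    fix x :: real assume "x > 0"
    define D where "D = b^2+4*x^2"
    have p: "D > 0" using b by (simp add: add_pos_nonneg D_def)
    hence nz: "b^2+4*x^2 \<noteq> 0" by (simp add: D_def)
    have d1: "((\<lambda>x. x/(2*b^2*(b^2+4*x^2))) has_real_derivative (D - 8*x^2)/(2*b^2*D^2)) (at x)"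
      apply (rule DERIV_cong)
       apply (rule derivative_eq_intros refl)+
      using b nz apply simp_all
      unfolding D_def[symmetric] using b p by (simp add: field_simps power2_eq_square)
    have d2: "((\<lambda>x. arctan (2*x/b)/(4*b^3)) has_real_derivative 2*b/D/(4*b^3)) (at x)"
      unfolding D_def by (rule DERIV_cdivide[OF has_real_derivative_arctan_scaled[OF b]])
    have e8: "8*x^2 = 2*(D - b^2)" by (simp add: D_def)
    show "(F has_real_derivative 1/(b^2+4*x^2)^2) (at x)"
      unfolding F_def
      apply (rule DERIV_cong[OF DERIV_add[OF d1 d2]])
      unfolding D_def[symmetric] e8 using p b by (simp add: field_simps power2_eq_square power3_eq_cube)
    show "isCont (\<lambda>x. 1/(b^2+4*x^2)^2) x" using p by (auto intro!: continuous_intros simp: D_def)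
    show "0 \<le> 1/(b^2+4*x^2)^2" using p by simp
  next
    show "(F \<longlongrightarrow> 0) (at_right 0)" unfolding F_def using b by real_asymp
    show "(F \<longlongrightarrow> pi * inverse (b^3) / 8) at_top" unfolding F_def using b by real_asymp
  qed
  thus ?thesis by (simp add: field_simps)
qed

lemma tendsto_integral_atLeastAtMost_nat:
  fixes h G :: "real \<Rightarrow> real"
  assumes h: "h integrable_on {0..}" and G: "G integrable_on {0..}"
    and dom: "\<And>x. x \<ge> 0 \<Longrightarrow> \<bar>h x\<bar> \<le> G x"
  shows "(\<lambda>N::nat. integral {0..real N} h) \<longlonglongrightarrow> integral {0..} h"
proof -
  define f where "f N x = (if x \<in> {..real N} then h x else 0)" for N :: nat and x
  have se: "{..real N} \<inter> {0..} = {0..real N}" for N :: nat by auto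
  have e: "integral {0..} (f N) = integral {0..real N} h" for N
    unfolding f_def integral_restrict_Int se ..
  have "(\<lambda>N. integral {0..} (f N)) \<longlonglongrightarrow> integral {0..} h"
  proof (rule dominated_convergence(2)[OF _ G])
    fix N
    show "f N integrable_on {0..}" unfolding f_def integrable_restrict_Int se
      by (rule integrable_on_subinterval[OF h]) auto
  next
    fix N and x :: real assume "x \<in> {0..}"
    thus "norm (f N x) \<le> G x" using dom[of x] by (auto simp: f_def)
  next
    fix x :: real
    obtain N0 :: nat where "x \<le> real N0" using real_arch_simple by blast
    hence "\<forall>\<^sub>F N in sequentially. f N x = h x"
      by (auto simp: f_def eventually_sequentially intro!: exI[of _ N0] elim: order_trans)
    thus "(\<lambda>N. f N x) \<longlonglongrightarrow> h x" by (rule tendsto_eventually)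
  qed
  thus ?thesis unfolding e .
qed

section \<open>The integral on the right\<close>

lemma rhs_integrand_has_integral:
  "(rhs_integrand has_integral (8/pi^2) * (\<Sum>k. 1/(2*real k+1)^3)) {0..}"
proof -
  have term_eq: "8*pi / odd_pi k^3 = (8/pi^2) * (1/(2*real k+1)^3)" for k
    by (simp add: odd_pi_def power_mult_distrib power3_eq_cube power2_eq_square)
  define f where "f n x = (\<Sum>i<n. 64 / (odd_pi i^2 + 4*x^2)^2)" for n and x :: real
  have fi: "(f n has_integral (\<Sum>i<n. (8/pi^2) * (1/(2*real i+1)^3))) {0<..}" for n
    unfolding f_def has_integral_Ioi_iff_Ici
  proof (intro has_integral_sum)
    fix i :: nat
    have "((\<lambda>x. 64 * (1/(odd_pi i^2+4*x^2)^2)) has_integral 64 * (pi/(8 * odd_pi i ^ 3))) {0..}"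
      by (intro has_integral_mult_right has_integral_inverse_sq_plus_squared odd_pi_pos)
    hence "((\<lambda>x. 64 / (odd_pi i^2 + 4*x^2)^2) has_integral 8*pi / odd_pi i^3) {0..}"
      by simp
    thus "((\<lambda>x. 64 / (odd_pi i^2 + 4*x^2)^2) has_integral (8/pi^2) * (1/(2*real i+1)^3)) {0..}"
      unfolding term_eq .
  qed auto
  show ?thesis unfolding has_integral_Ioi_iff_Ici[symmetric]
  proof (rule has_integral_monotone_convergence_increasing[OF fi])
    fix n and x :: real
    show "f n x \<le> f (Suc n) x" unfolding f_def by simp
  next
    fix x :: real assume "x \<in> {0<..}"
    thus "(\<lambda>n. f n x) \<longlonglongrightarrow> rhs_integrand x"
      using rhs_integrand_partial_fractions[of x] unfolding f_def sums_def by simp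
  next
    show "(\<lambda>n. \<Sum>i<n. (8/pi^2) * (1/(2*real i+1)^3)) \<longlonglongrightarrow> (8/pi^2) * (\<Sum>k. 1/(2*real k+1)^3)"
      using sums_mult[OF summable_sums[OF summable_inverse_odd_cube], of "8/pi^2"]
      unfolding sums_def .
  qed
qed

section \<open>The kernel sin(pi t)^2 / (1 - t^2) integrates to zero\<close>

definition sinpi_sq_div :: "real \<Rightarrow> real" where
  "sinpi_sq_div u = sin (pi*u)^2 / u"

definition sinpi_sq_ratio :: "real \<Rightarrow> real" where
  "sinpi_sq_ratio t = sin (pi*t)^2 / (1 - t^2)"

lemma nine_le_pi_sq: "9 \<le> pi^2"
  using power_mono[of 3 pi 2] pi_gt3 by simp

lemma abs_sinpi_sq_div_le: "\<bar>sinpi_sq_div u\<bar> \<le> pi^2 * \<bar>u\<bar>"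
proof (cases "u = 0")
  case False
  have "\<bar>sin (pi*u)\<bar>^2 \<le> \<bar>pi*u\<bar>^2" by (intro power_mono abs_sin_x_le_abs_x) auto
  hence "sin (pi*u)^2 \<le> pi^2 * u^2" by (simp add: power_mult_distrib)
  hence "\<bar>sinpi_sq_div u\<bar> \<le> pi^2 * u^2 / \<bar>u\<bar>"
    using False by (simp add: sinpi_sq_div_def abs_div divide_right_mono)
  also have "u^2 = \<bar>u\<bar> * \<bar>u\<bar>" by (simp add: power2_eq_square)
  also have "pi^2 * (\<bar>u\<bar> * \<bar>u\<bar>) / \<bar>u\<bar> = pi^2 * \<bar>u\<bar>" using False by (simp del: abs_mult_self_eq)
  finally show ?thesis .
qed (simp add: sinpi_sq_div_def)

lemma abs_sinpi_sq_div_le_inverse: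
  assumes "u > 0" shows "\<bar>sinpi_sq_div u\<bar> \<le> 1/u"
proof -
  have "sin (pi*u)^2 \<le> 1" by (simp add: sin_squared_eq)
  thus ?thesis using assms by (simp add: sinpi_sq_div_def abs_div divide_right_mono)
qed

lemma sinpi_sq_div_minus: "sinpi_sq_div (-u) = - sinpi_sq_div u"
  by (simp add: sinpi_sq_div_def)

lemma isCont_sinpi_sq_div: "isCont sinpi_sq_div u"
proof (cases "u = 0")
  case False
  thus ?thesis unfolding sinpi_sq_div_def[abs_def] by (auto intro!: continuous_intros)
next
  case True
  have "(sinpi_sq_div \<longlongrightarrow> 0) (at 0)"
  proof (rule Lim_null_comparison)
    show "\<forall>\<^sub>F x in at 0. norm (sinpi_sq_div x) \<le> pi^2 * \<bar>x\<bar>" using abs_sinpi_sq_div_le by simp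
    show "((\<lambda>x. pi^2 * \<bar>x\<bar>) \<longlongrightarrow> 0) (at 0)"
      by (rule tendsto_eq_intros refl | simp)+
  qed
  thus ?thesis using True by (simp add: isCont_def sinpi_sq_div_def)
qed

lemma continuous_on_sinpi_sq_div: "continuous_on S sinpi_sq_div"
  by (simp add: continuous_at_imp_continuous_on isCont_sinpi_sq_div)

text \<open>This also holds at t = 1 and t = -1, where both sides are 0.\<close>

lemma sinpi_sq_ratio_eq: "sinpi_sq_ratio t = (sinpi_sq_div (1 - t) + sinpi_sq_div (1 + t)) / 2"
proof -
  have s: "sin (pi*(1-t))^2 = sin (pi*t)^2" "sin (pi*(1+t))^2 = sin (pi*t)^2"
    by (simp_all add: right_diff_distrib distrib_left sin_diff sin_add)
  show ?thesis
  proof (cases "t = 1 \<or> t = -1")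
    case True
    thus ?thesis by (auto simp: sinpi_sq_ratio_def sinpi_sq_div_def)
  next
    case False
    hence "1 - t \<noteq> 0" "1 + t \<noteq> 0" "1 - t^2 \<noteq> 0"
      by (auto simp: power2_eq_square algebra_simps square_eq_1_iff)
    moreover have "1 - t^2 = (1-t)*(1+t)" by (simp add: power2_eq_square algebra_simps)
    ultimately show ?thesis
      unfolding sinpi_sq_ratio_def sinpi_sq_div_def s by (simp add: field_simps)
  qed
qed

lemma continuous_on_sinpi_sq_ratio: "continuous_on S sinpi_sq_ratio"
  unfolding sinpi_sq_ratio_eq[abs_def]
  by (intro continuous_intros continuous_on_compose2[OF continuous_on_sinpi_sq_div]) auto

lemma abs_sinpi_sq_ratio_le:
  assumes "t \<ge> 0" shows "\<bar>sinpi_sq_ratio t\<bar> \<le> 5*pi^2 / (1 + t^2)"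
proof (cases "t \<le> 2")
  case True
  have "pi^2 * \<bar>1 - t\<bar> \<le> pi^2 * 1" using True assms by (intro mult_left_mono) auto
  hence "\<bar>sinpi_sq_div (1 - t)\<bar> \<le> pi^2"
    using abs_sinpi_sq_div_le[of "1-t"] by linarith
  moreover have "\<bar>sinpi_sq_div (1 + t)\<bar> \<le> 1"
    using abs_sinpi_sq_div_le_inverse[of "1+t"] assms by (simp add: order_trans)
  ultimately have "\<bar>sinpi_sq_ratio t\<bar> \<le> pi^2"
    using nine_le_pi_sq by (simp add: sinpi_sq_ratio_eq)
  also have "\<dots> \<le> 5*pi^2 / (1 + t^2)"
  proof -
    have "t^2 \<le> 2^2" using True assms by (intro power_mono) auto
    hence "pi^2 * (1 + t^2) \<le> pi^2 * 5" by (intro mult_left_mono) auto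
    thus ?thesis by (simp add: le_divide_eq add_pos_nonneg mult.commute)
  qed
  finally show ?thesis .
next
  case False
  have t2: "t^2 > 2^2" using False assms by (intro power_strict_mono) auto
  have "\<bar>sinpi_sq_ratio t\<bar> = sin (pi*t)^2 / (t^2 - 1)"
    using t2 by (simp add: sinpi_sq_ratio_def abs_div abs_minus_commute)
  also have "\<dots> \<le> 1 / (t^2 - 1)" using t2 by (intro divide_right_mono) (auto simp: sin_squared_eq)
  also have "\<dots> \<le> 5*pi^2 / (1 + t^2)"
  proof -
    have "1 + t^2 \<le> 5 * (t^2 - 1)" using t2 by simp
    also have "\<dots> \<le> 5*pi^2 * (t^2 - 1)" using t2 nine_le_pi_sq by (intro mult_right_mono) auto
    finally have "1 * (1 + t^2) \<le> 5*pi^2 * (t^2 - 1)" by simp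
    thus ?thesis using t2 by (simp add: divide_simps)
  qed
  finally show ?thesis .
qed

lemma integral_odd_symmetric:
  fixes f :: "real \<Rightarrow> real"
  assumes "\<And>x. f (-x) = - f x"
  shows "integral {-a..a} f = 0"
proof -
  have "integral {-a..-(-a)} (\<lambda>x. f (-x)) = integral {-a..a} f"
    by (rule Henstock_Kurzweil_Integration.integral_reflect_real)
  hence "- integral {-a..a} f = integral {-a..a} f"
    by (simp add: assms integral_neg)
  thus ?thesis by simp
qed

lemma integral_sinpi_sq_ratio_Icc:
  fixes M :: real assumes M: "M \<ge> 2"
  shows "integral {0..M} sinpi_sq_ratio = integral {M-1..M+1} sinpi_sq_div / 2"
proof -
  have int: "sinpi_sq_div integrable_on {a..b}" for a b
    by (rule integrable_continuous_real[OF continuous_on_sinpi_sq_div])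
  have i: "(\<lambda>t. sinpi_sq_div (1 - t)) integrable_on {0..M}" "(\<lambda>t. sinpi_sq_div (1 + t)) integrable_on {0..M}"
    by (intro integrable_continuous_real continuous_on_compose2[OF continuous_on_sinpi_sq_div]
          continuous_intros; auto)+
  have "integral {0..M} sinpi_sq_ratio
      = (integral {0..M} (\<lambda>t. sinpi_sq_div (1 - t)) + integral {0..M} (\<lambda>t. sinpi_sq_div (1 + t))) / 2"
    using i by (simp add: sinpi_sq_ratio_eq[abs_def] integral_add integral_divide)
  also have "integral {0..M} (\<lambda>t. sinpi_sq_div (1 + t)) = integral {1..M+1} sinpi_sq_div"
    using integral_shift_Icc_real[of 0 M sinpi_sq_div 1] by (simp add: o_def add.commute)
  also have "integral {0..M} (\<lambda>t. sinpi_sq_div (1 - t)) = integral {1-M..1} sinpi_sq_div"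
  proof -
    have "integral {-0..-(-M)} (\<lambda>x. sinpi_sq_div (1 + (-x))) = integral {-M..0} (\<lambda>s. sinpi_sq_div (1 + s))"
      by (rule Henstock_Kurzweil_Integration.integral_reflect_real)
    also have "\<dots> = integral {-M+1..0+1} sinpi_sq_div"
      using integral_shift_Icc_real[of "-M" 0 sinpi_sq_div 1] by (simp add: o_def add.commute)
    finally show ?thesis by simp
  qed
  also have "integral {1-M..1} sinpi_sq_div + integral {1..M+1} sinpi_sq_div
      = integral {M-1..M+1} sinpi_sq_div"
  proof -
    have "integral {1-M..1} sinpi_sq_div + integral {1..M-1} sinpi_sq_div = integral {1-M..M-1} sinpi_sq_div"
         "integral {1..M-1} sinpi_sq_div + integral {M-1..M+1} sinpi_sq_div = integral {1..M+1} sinpi_sq_div"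
      using M by (intro Henstock_Kurzweil_Integration.integral_combine int; simp)+
    moreover have "integral {1-M..M-1} sinpi_sq_div = 0"
      using integral_odd_symmetric[of sinpi_sq_div "M-1"] sinpi_sq_div_minus by simp
    ultimately show ?thesis by linarith
  qed
  finally show ?thesis .
qed

lemma tendsto_integral_sinpi_sq_ratio: "((\<lambda>M. integral {0..M} sinpi_sq_ratio) \<longlongrightarrow> 0) at_top"
proof (rule Lim_null_comparison)
  have bnd: "\<bar>integral {0..M} sinpi_sq_ratio\<bar> \<le> 1/(M-1)" if M: "M \<ge> 2" for M
  proof -
    have "norm (integral {M-1..M+1} sinpi_sq_div) \<le> 1/(M-1) * (M+1 - (M-1))"
    proof (rule integral_bound)
      fix t assume t: "t \<in> {M-1..M+1}"
      hence "\<bar>sinpi_sq_div t\<bar> \<le> 1/t" using M by (intro abs_sinpi_sq_div_le_inverse) auto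
      also have "1/t \<le> 1/(M-1)" using t M by (intro divide_left_mono) auto
      finally show "norm (sinpi_sq_div t) \<le> 1/(M-1)" by simp
    qed (use M continuous_on_sinpi_sq_div in auto)
    thus ?thesis using M by (simp add: integral_sinpi_sq_ratio_Icc)
  qed
  show "\<forall>\<^sub>F M in at_top. norm (integral {0..M} sinpi_sq_ratio) \<le> 1/(M-1)"
    using eventually_ge_at_top[of "2::real"] by eventually_elim (simp add: bnd)
  show "((\<lambda>M::real. 1/(M-1)) \<longlongrightarrow> 0) at_top" by real_asymp
qed

lemma integrable_inverse_one_plus_sq_scaled:
  fixes R :: real assumes R: "R > 0"
  shows "(\<lambda>x. 1 / (1 + (R*x)^2)) integrable_on {0..}"
proof -
  have "((\<lambda>x. (4/R^2) * (1/((2/R)^2+4*x^2))) has_integral (4/R^2) * (pi/(4*(2/R)))) {0..}"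
    using R by (intro has_integral_mult_right has_integral_inverse_sq_plus) auto
  moreover have "(4/R^2) * (1/((2/R)^2+4*x^2)) = 1 / (1 + (R*x)^2)" for x
  proof -
    have "(2/R)^2+4*x^2 = 4*(1 + (R*x)^2)/R^2" using R by (simp add: field_simps power2_eq_square)
    moreover have "1 + (R*x)^2 > 0" by (simp add: add_pos_nonneg)
    ultimately show ?thesis using R by (simp add: field_simps)
  qed
  ultimately show ?thesis by (auto simp: integrable_on_def)
qed

lemma absolutely_integrable_sinpi_sq_ratio_scaled:
  fixes R :: real assumes R: "R > 0"
  shows "(\<lambda>x. sinpi_sq_ratio (R*x)) absolutely_integrable_on {0..}"
proof (rule measurable_bounded_by_integrable_imp_absolutely_integrable)
  show "(\<lambda>x. sinpi_sq_ratio (R*x)) \<in> borel_measurable (lebesgue_on {0..})"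
    by (intro continuous_imp_measurable_on_sets_lebesgue
          continuous_on_compose2[OF continuous_on_sinpi_sq_ratio] continuous_intros) auto
  show "(\<lambda>x. 5*pi^2 * (1 / (1 + (R*x)^2))) integrable_on {0..}"
    by (intro integrable_on_mult_right integrable_inverse_one_plus_sq_scaled R)
  show "\<And>x. x \<in> {0..} \<Longrightarrow> norm (sinpi_sq_ratio (R*x)) \<le> 5*pi^2 * (1 / (1 + (R*x)^2))"
    using abs_sinpi_sq_ratio_le R by simp
qed auto

lemma integral_sinpi_sq_ratio_scaled:
  fixes R :: real assumes R: "R > 0"
  shows "integral {0..} (\<lambda>x. sinpi_sq_ratio (R*x)) = 0"
proof -
  have "(\<lambda>N::nat. integral {0..real N} (\<lambda>x. sinpi_sq_ratio (R*x)))
      \<longlonglongrightarrow> integral {0..} (\<lambda>x. sinpi_sq_ratio (R*x))"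
  proof (rule tendsto_integral_atLeastAtMost_nat)
    show "(\<lambda>x. sinpi_sq_ratio (R*x)) integrable_on {0..}"
      using absolutely_integrable_sinpi_sq_ratio_scaled[OF R] by (simp add: absolutely_integrable_on_def)
    show "(\<lambda>x. 5*pi^2 * (1 / (1 + (R*x)^2))) integrable_on {0..}"
      by (intro integrable_on_mult_right integrable_inverse_one_plus_sq_scaled R)
  qed (use abs_sinpi_sq_ratio_le R in simp)
  moreover have "(\<lambda>N::nat. integral {0..real N} (\<lambda>x. sinpi_sq_ratio (R*x))) \<longlonglongrightarrow> 0"
  proof -
    have "integral {0..real N} (\<lambda>x. sinpi_sq_ratio (R*x)) = (1/R) * integral {0..R*real N} sinpi_sq_ratio"
      for N :: nat
    proof -
      have "(\<lambda>x. x/R) ` {0..R*real N} = {0..real N}"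
      proof
        show "(\<lambda>x. x/R) ` {0..R*real N} \<subseteq> {0..real N}" using R by (auto simp: field_simps)
        show "{0..real N} \<subseteq> (\<lambda>x. x/R) ` {0..R*real N}"
        proof
          fix y assume "y \<in> {0..real N}"
          hence "R*y \<in> {0..R*real N}" "y = (R*y)/R" using R by auto
          thus "y \<in> (\<lambda>x. x/R) ` {0..R*real N}" by blast
        qed
      qed
      thus ?thesis
        using integral_stretch_real[of R 0 "R*real N" sinpi_sq_ratio] R by simp
    qed
    moreover have "filterlim (\<lambda>N::nat. R * real N) at_top sequentially"
      by (rule filterlim_tendsto_pos_mult_at_top[OF tendsto_const R filterlim_real_sequentially])
    hence "(\<lambda>N::nat. (1/R) * integral {0..R*real N} sinpi_sq_ratio) \<longlonglongrightarrow> (1/R) * 0"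
      by (intro tendsto_mult tendsto_const filterlim_compose[OF tendsto_integral_sinpi_sq_ratio])
    ultimately show ?thesis by simp
  qed
  ultimately show ?thesis using LIMSEQ_unique by blast
qed

section \<open>The integral of sin(pi R x)^2 / (c^2 + 4 x^2)\<close>

text \<open>Integration by parts against sin(k x) / k: the boundary term and the integral of
-q' are both controlled by q 0.\<close>

lemma abs_integral_sin_mult_nonpos_le:
  fixes q' :: "real \<Rightarrow> real" and k N Q :: real
  assumes k: "k > 0" and iq': "(q' has_integral Q) {0..N}"
    and cq': "continuous_on {0..N} q'"
    and q'_nonpos: "\<And>x. x \<in> {0..N} \<Longrightarrow> q' x \<le> 0"
  shows "\<bar>integral {0..N} (\<lambda>x. sin (k*x) / k * q' x)\<bar> \<le> - Q / k"
proof -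
  have im: "((\<lambda>x. (-1/k) * q' x) has_integral (-1/k) * Q) {0..N}"
    by (rule has_integral_mult_right[OF iq'])
  have "norm (integral {0..N} (\<lambda>x. sin (k*x) / k * q' x)) \<le> integral {0..N} (\<lambda>x. (-1/k) * q' x)"
  proof (rule integral_norm_bound_integral)
    show "(\<lambda>x. sin (k*x) / k * q' x) integrable_on {0..N}"
      using cq' k by (intro integrable_continuous_real continuous_intros) auto
    show "(\<lambda>x. (-1/k) * q' x) integrable_on {0..N}" using im by blast
    fix x assume x: "x \<in> {0..N}"
    have "\<bar>sin (k*x) * q' x\<bar> \<le> \<bar>q' x\<bar>" by (simp add: abs_mult mult_left_le_one_le)
    hence "\<bar>sin (k*x) * q' x\<bar> \<le> - q' x" using q'_nonpos[OF x] by simp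
    hence "\<bar>sin (k*x) * q' x\<bar> / k \<le> (- q' x) / k" using k by (intro divide_right_mono) auto
    thus "norm (sin (k*x) / k * q' x) \<le> (-1/k) * q' x"
      using k by (simp add: abs_mult abs_div)
  qed
  also have "\<dots> = - Q / k"
    using integral_unique[OF im] by simp
  finally show ?thesis by simp
qed

lemma abs_integral_cos_mult_antimono_le:
  fixes q q' :: "real \<Rightarrow> real" and k N :: real
  assumes k: "k > 0" and N: "N \<ge> 0"
    and dq: "\<And>x. (q has_real_derivative q' x) (at x)"
    and cq': "continuous_on {0..N} q'"
    and q'_nonpos: "\<And>x. x \<in> {0..N} \<Longrightarrow> q' x \<le> 0"
    and qN: "q N \<ge> 0"
  shows "\<bar>integral {0..N} (\<lambda>x. cos (k*x) * q x)\<bar> \<le> q 0 / k"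
proof -
  define H where "H x = sin (k*x) / k * q x" for x
  define H' where "H' x = cos (k*x) * q x + sin (k*x) / k * q' x" for x
  have dH: "(H has_real_derivative H' x) (at x)" for x
  proof -
    have "((\<lambda>x. sin (k*x) / k) has_real_derivative cos (k*x)) (at x)"
      using k by (auto intro!: derivative_eq_intros)
    thus ?thesis unfolding H_def[abs_def] H'_def
      by (rule DERIV_cong[OF DERIV_mult[OF _ dq]]) (simp add: algebra_simps)
  qed
  have iH': "(H' has_integral (H N - H 0)) {0..N}"
    by (rule fundamental_theorem_of_calculus[OF N])
       (auto intro: has_field_derivative_at_within[OF dH]
             simp: has_real_derivative_iff_has_vector_derivative[symmetric])
  have iq': "(q' has_integral (q N - q 0)) {0..N}"
    by (rule fundamental_theorem_of_calculus[OF N])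
       (auto intro: has_field_derivative_at_within[OF dq]
             simp: has_real_derivative_iff_has_vector_derivative[symmetric])
  have iu: "(\<lambda>x. sin (k*x) / k * q' x) integrable_on {0..N}"
    using cq' k by (intro integrable_continuous_real continuous_intros) auto
  have "integral {0..N} (\<lambda>x. cos (k*x) * q x)
      = (H N - H 0) - integral {0..N} (\<lambda>x. sin (k*x) / k * q' x)"
  proof -
    have "integral {0..N} (\<lambda>x. H' x - sin (k*x) / k * q' x)
        = integral {0..N} H' - integral {0..N} (\<lambda>x. sin (k*x) / k * q' x)"
      using iH' iu by (intro integral_diff) (auto simp: integrable_on_def)
    moreover have "(\<lambda>x. H' x - sin (k*x) / k * q' x) = (\<lambda>x. cos (k*x) * q x)" by (auto simp: H'_def)
    ultimately show ?thesis using iH' by (simp add: integral_unique)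
  qed
  moreover have "\<bar>integral {0..N} (\<lambda>x. sin (k*x) / k * q' x)\<bar> \<le> - (q N - q 0) / k"
    by (rule abs_integral_sin_mult_nonpos_le[OF k iq' cq' q'_nonpos])
  moreover have "\<bar>H N\<bar> \<le> q N / k"
    using qN k by (simp add: H_def abs_mult mult_left_le_one_le divide_right_mono)
  moreover have "H 0 = 0" by (simp add: H_def)
  ultimately have "\<bar>integral {0..N} (\<lambda>x. cos (k*x) * q x)\<bar> \<le> q N / k + - (q N - q 0) / k"
    by linarith
  thus ?thesis by (simp add: diff_divide_distrib)
qed

lemma abs_integral_cos_div_sq_plus_le:
  fixes c R N :: real assumes c: "c > 0" and R: "R > 0" and N: "N \<ge> 0"
  shows "\<bar>integral {0..N} (\<lambda>x. cos (2*pi*R*x) * (1/(c^2+4*x^2)))\<bar> \<le> 1/(2*pi*R*c^2)"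
proof -
  have qp: "c^2+4*x^2 > 0" for x :: real using c by (intro add_pos_nonneg) auto
  have "\<bar>integral {0..N} (\<lambda>x. cos ((2*pi*R)*x) * (1/(c^2+4*x^2)))\<bar> \<le> (1/(c^2+4*0^2)) / (2*pi*R)"
  proof (rule abs_integral_cos_mult_antimono_le[where q' = "\<lambda>x. -8*x/(c^2+4*x^2)^2"])
    fix x :: real
    have nz: "c^2+4*x^2 \<noteq> 0" using qp[of x] by simp
    show "((\<lambda>x. 1/(c^2+4*x^2)) has_real_derivative -8*x/(c^2+4*x^2)^2) (at x)"
      apply (rule DERIV_cong)
       apply (rule derivative_eq_intros refl)+
      using nz apply simp_all
      using nz by (simp add: field_simps power2_eq_square)
    assume "x \<in> {0..N}"
    thus "-8*x/(c^2+4*x^2)^2 \<le> 0" by (simp add: divide_nonpos_pos qp)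
  next
    show "continuous_on {0..N} (\<lambda>x. -8*x/(c^2+4*x^2)^2)"
      using qp by (auto intro!: continuous_intros simp: less_imp_neq[symmetric])
  qed (use R N qp in auto)
  thus ?thesis by (simp add: ac_simps)
qed

lemma sin_sq_div_sq_plus_integral:
  fixes c R :: real assumes c: "c > 0" and R: "R > 0"
  shows "(\<lambda>x. sin (pi*R*x)^2 / (c^2+4*x^2)) integrable_on {0..}"
    "\<bar>integral {0..} (\<lambda>x. sin (pi*R*x)^2 / (c^2+4*x^2)) - pi/(8*c)\<bar> \<le> 1/(4*pi*R*c^2)"
proof -
  define q where "q x = 1/(c^2+4*x^2)" for x :: real
  have qp: "c^2+4*x^2 > 0" for x :: real using c by (intro add_pos_nonneg) auto
  have qi: "(q has_integral pi/(4*c)) {0..}" unfolding q_def by (rule has_integral_inverse_sq_plus[OF c])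
  have cb: "\<bar>cos (2*pi*R*x) * q x\<bar> \<le> q x" for x
    using qp[of x] abs_cos_le_one[of "2*pi*R*x"] by (simp add: q_def abs_mult divide_right_mono)
  have ci: "(\<lambda>x. cos (2*pi*R*x) * q x) integrable_on {0..}"
  proof -
    have "(\<lambda>x. cos (2*pi*R*x) * q x) absolutely_integrable_on {0..}"
    proof (rule measurable_bounded_by_integrable_imp_absolutely_integrable)
      show "(\<lambda>x. cos (2*pi*R*x) * q x) \<in> borel_measurable (lebesgue_on {0..})"
        unfolding q_def using qp
        by (intro continuous_imp_measurable_on_sets_lebesgue continuous_intros)
           (auto simp: less_imp_neq[symmetric])
    qed (use cb qi in auto)
    thus ?thesis by (simp add: absolutely_integrable_on_def)
  qed
  define E where "E = integral {0..} (\<lambda>x. cos (2*pi*R*x) * q x)"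
  have lim: "(\<lambda>N::nat. integral {0..real N} (\<lambda>x. cos (2*pi*R*x) * q x)) \<longlonglongrightarrow> E"
    unfolding E_def using qi cb by (intro tendsto_integral_atLeastAtMost_nat[OF ci]) auto
  have "norm E \<le> 1/(2*pi*R*c^2)"
    by (rule Lim_norm_ubound[OF _ lim]) (use abs_integral_cos_div_sq_plus_le[OF c R] in \<open>auto simp: q_def\<close>)
  hence Eb: "\<bar>E\<bar> \<le> 1/(2*pi*R*c^2)" by simp
  have "(\<lambda>x. sin (pi*R*x)^2 / (c^2+4*x^2)) = (\<lambda>x. (q x - cos (2*pi*R*x) * q x) / 2)"
  proof
    fix x
    have e: "cos (2*pi*R*x) = 1 - 2 * sin (pi*R*x)^2"
      using cos_double_sin[of "pi*R*x"] by (simp add: mult.assoc)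
    show "sin (pi*R*x)^2 / (c^2+4*x^2) = (q x - cos (2*pi*R*x) * q x) / 2"
      using qp[of x] unfolding e q_def by (simp add: field_simps)
  qed
  moreover have "((\<lambda>x. (q x - cos (2*pi*R*x) * q x) / 2) has_integral (pi/(4*c) - E) / 2) {0..}"
    unfolding E_def by (intro has_integral_divide has_integral_diff qi integrable_integral ci)
  ultimately have "((\<lambda>x. sin (pi*R*x)^2 / (c^2+4*x^2)) has_integral (pi/(4*c) - E) / 2) {0..}"
    by simp
  moreover have "(pi/(4*c) - E) / 2 - pi/(8*c) = - E/2" using c by (simp add: field_simps)
  ultimately show "(\<lambda>x. sin (pi*R*x)^2 / (c^2+4*x^2)) integrable_on {0..}"
    "\<bar>integral {0..} (\<lambda>x. sin (pi*R*x)^2 / (c^2+4*x^2)) - pi/(8*c)\<bar> \<le> 1/(4*pi*R*c^2)"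
    using Eb by (auto simp: integral_unique ac_simps)
qed

section \<open>The limit on the left\<close>

lemma sinpi_sq_ratio_scaled_div_sq_plus:
  fixes R x c :: real assumes R: "R > 0" and x: "x \<ge> 0" and c: "c > 0"
  shows "sinpi_sq_ratio (R*x) / (c^2+4*x^2)
       = (R^2 * sinpi_sq_ratio (R*x) + 4 * (sin (pi*R*x)^2 / (c^2+4*x^2))) / (R^2*c^2+4)"
proof -
  define s where "s = sin (pi*R*x)^2"
  define D where "D = c^2+4*x^2"
  define F where "F = 1 - R^2*x^2"
  define E where "E = R^2*c^2+4"
  have ratio: "sinpi_sq_ratio (R*x) = s / F"
    by (simp add: sinpi_sq_ratio_def s_def F_def power_mult_distrib mult.assoc)
  have D: "D > 0" using c by (simp add: D_def add_pos_nonneg)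
  have E: "E > 0" by (simp add: E_def add_nonneg_pos)
  show ?thesis
  proof (cases "R*x = 1")
    case True
    hence "s = 0" by (simp add: s_def mult.assoc)
    thus ?thesis unfolding ratio s_def[symmetric] by simp
  next
    case False
    have "R*x \<ge> 0" using R x by simp
    hence "(R*x)^2 \<noteq> 1" using False by (auto simp: power2_eq_1_iff)
    hence F: "F \<noteq> 0" by (simp add: F_def power_mult_distrib)
    have key: "R^2 * D + 4 * F = E" by (simp add: D_def F_def E_def algebra_simps)
    have "R^2 * (s/F) + 4 * (s/D) = s * (R^2 * D + 4 * F) / (F * D)"
      using F D by (simp add: field_simps)
    hence "(R^2 * (s/F) + 4 * (s/D)) / E = s / F / D"
      unfolding key using F D E by (simp add: field_simps)
    thus ?thesis unfolding ratio s_def[symmetric] D_def[symmetric] E_def[symmetric] by simp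
  qed
qed

lemma lhs_integrand_partial_fractions:
  fixes R x :: real assumes R: "R > 0" and x: "x \<ge> 0"
  shows "(\<lambda>k. (8*R^2/pi) * (sinpi_sq_ratio (R*x) / ((2*real k+1)^2+4*x^2)))
           sums (R^4 * lhs_integrand R x)"
proof (cases "x = 0")
  case True
  thus ?thesis by (simp add: lhs_integrand_def sinpi_sq_ratio_def)
next
  case False
  hence xp: "x > 0" using x by simp
  have s: "(\<lambda>k. (R^2 * sinpi_sq_ratio (R*x) / x) * (8*x / (pi*((2*real k+1)^2 + 4*x^2))))
      sums ((R^2 * sinpi_sq_ratio (R*x) / x) * tanh (pi*x))"
    by (intro sums_mult tanh_pi_partial_fractions)
  have term_eq: "(R^2 * sinpi_sq_ratio (R*x) / x) * (8*x / (pi*((2*real k+1)^2 + 4*x^2)))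
      = (8*R^2/pi) * (sinpi_sq_ratio (R*x) / ((2*real k+1)^2+4*x^2))" for k
  proof -
    have "(2*real k+1)^2 + 4*x^2 > 0" by (intro add_pos_nonneg) auto
    thus ?thesis using xp by (simp add: field_simps)
  qed
  have eq: "(R^2 * sinpi_sq_ratio (R*x) / x) * tanh (pi*x) = R^4 * lhs_integrand R x"
  proof -
    have "lhs_integrand R x = sinpi_sq_ratio (R*x) * (x * tanh (pi*x) / (R*x)^2)"
      unfolding lhs_integrand_def sinpi_sq_ratio_def by (simp add: mult.assoc)
    thus ?thesis using xp R by (simp add: field_simps power2_eq_square power4_eq_xxxx)
  qed
  show ?thesis using s unfolding term_eq eq .
qed

definition lhs_term :: "real \<Rightarrow> nat \<Rightarrow> real" where
  "lhs_term R k = 32*R^2 / (pi*(R^2*(2*real k+1)^2+4)) *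
     integral {0..} (\<lambda>x. sin (pi*R*x)^2 / ((2*real k+1)^2+4*x^2))"

lemma lhs_term_has_integral:
  fixes R :: real assumes R: "R > 0"
  shows "((\<lambda>x. (8*R^2/pi) * (sinpi_sq_ratio (R*x) / ((2*real k+1)^2+4*x^2)))
           has_integral lhs_term R k) {0..}"
proof -
  define c where "c = 2*real k+1"
  have c: "c > 0" by (simp add: c_def add_nonneg_pos)
  have "((\<lambda>x. sinpi_sq_ratio (R*x)) has_integral 0) {0..}"
    using absolutely_integrable_sinpi_sq_ratio_scaled[OF R] integral_sinpi_sq_ratio_scaled[OF R]
    by (metis absolutely_integrable_on_def integrable_integral)
  moreover have "((\<lambda>x. sin (pi*R*x)^2 / (c^2+4*x^2)) has_integral
      integral {0..} (\<lambda>x. sin (pi*R*x)^2 / (c^2+4*x^2))) {0..}"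
    using sin_sq_div_sq_plus_integral(1)[OF c R] by (rule integrable_integral)
  ultimately have "((\<lambda>x. (8*R^2/pi) * ((R^2 * sinpi_sq_ratio (R*x) + 4 * (sin (pi*R*x)^2 / (c^2+4*x^2)))
      / (R^2*c^2+4))) has_integral (8*R^2/pi) * ((R^2 * 0 + 4 *
      integral {0..} (\<lambda>x. sin (pi*R*x)^2 / (c^2+4*x^2))) / (R^2*c^2+4))) {0..}"
    by (intro has_integral_mult_right has_integral_divide has_integral_add has_integral_mult_right)
  moreover have "(8*R^2/pi) * ((R^2 * 0 + 4 * integral {0..} (\<lambda>x. sin (pi*R*x)^2 / (c^2+4*x^2)))
      / (R^2*c^2+4)) = lhs_term R k"
    by (simp add: lhs_term_def c_def)
  ultimately have "((\<lambda>x. (8*R^2/pi) * ((R^2 * sinpi_sq_ratio (R*x) + 4 * (sin (pi*R*x)^2 / (c^2+4*x^2)))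
      / (R^2*c^2+4))) has_integral lhs_term R k) {0..}" by simp
  moreover have "(8*R^2/pi) * ((R^2 * sinpi_sq_ratio (R*x) + 4 * (sin (pi*R*x)^2 / (c^2+4*x^2)))
      / (R^2*c^2+4)) = (8*R^2/pi) * (sinpi_sq_ratio (R*x) / ((2*real k+1)^2+4*x^2))"
    if "x \<in> {0..}" for x
    using sinpi_sq_ratio_scaled_div_sq_plus[OF R _ c, of x] that by (simp add: c_def)
  ultimately show ?thesis by (rule has_integral_eq[rotated]) blast
qed

lemma abs_lhs_partial_sum_le:
  fixes R x :: real assumes R: "R > 0" and x: "x \<ge> 0"
  shows "\<bar>\<Sum>k<N. (8*R^2/pi) * (sinpi_sq_ratio (R*x) / ((2*real k+1)^2+4*x^2))\<bar>
       \<le> (8*R^2/pi) * (\<Sum>k. 1/(2*real k+1)^2) * (5*pi^2 / (1 + (R*x)^2))"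
proof -
  have "\<bar>\<Sum>k<N. (8*R^2/pi) * (sinpi_sq_ratio (R*x) / ((2*real k+1)^2+4*x^2))\<bar>
      \<le> (\<Sum>k<N. (8*R^2/pi) * \<bar>sinpi_sq_ratio (R*x)\<bar> * (1/(2*real k+1)^2))"
  proof (rule order_trans[OF sum_abs sum_mono])
    fix k
    have "1/((2*real k+1)^2+4*x^2) \<le> 1/(2*real k+1)^2"
      by (intro divide_left_mono mult_pos_pos add_pos_nonneg) auto
    thus "\<bar>(8*R^2/pi) * (sinpi_sq_ratio (R*x) / ((2*real k+1)^2+4*x^2))\<bar>
        \<le> (8*R^2/pi) * \<bar>sinpi_sq_ratio (R*x)\<bar> * (1/(2*real k+1)^2)"
      by (simp add: abs_mult abs_div add_pos_nonneg mult_left_mono divide_inverse)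
  qed
  also have "\<dots> = (8*R^2/pi) * \<bar>sinpi_sq_ratio (R*x)\<bar> * (\<Sum>k<N. 1/(2*real k+1)^2)"
    by (simp add: sum_distrib_left)
  also have "\<dots> \<le> (8*R^2/pi) * (5*pi^2 / (1 + (R*x)^2)) * (\<Sum>k. 1/(2*real k+1)^2)"
    using abs_sinpi_sq_ratio_le[of "R*x"] R x
      sum_le_suminf[OF summable_inverse_odd_sq, of "{..<N}"]
    by (intro mult_mono mult_left_mono sum_nonneg) auto
  finally show ?thesis by (simp add: ac_simps)
qed

lemma lhs_integrand_series:
  fixes R :: real assumes R: "R > 0"
  shows "lhs_integrand R integrable_on {0..}"
    "lhs_term R sums (R^4 * integral {0..} (lhs_integrand R))"
proof -
  define t where "t k x = (8*R^2/pi) * (sinpi_sq_ratio (R*x) / ((2*real k+1)^2+4*x^2))" for k x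
  have fi: "((\<lambda>x. \<Sum>k<N. t k x) has_integral (\<Sum>k<N. lhs_term R k)) {0..}" for N
    unfolding t_def by (intro has_integral_sum lhs_term_has_integral[OF R]) auto
  define h where "h x = ((8*R^2/pi) * (\<Sum>k. 1/(2*real k+1)^2) * (5*pi^2)) * (1 / (1 + (R*x)^2))" for x
  have hi: "h integrable_on {0..}"
    unfolding h_def by (intro integrable_on_mult_right integrable_inverse_one_plus_sq_scaled R)
  have bnd: "norm (\<Sum>k<N. t k x) \<le> h x" if "x \<in> {0..}" for N x
    using abs_lhs_partial_sum_le[OF R, of x N] that by (simp add: t_def h_def)
  have conv: "(\<lambda>N. \<Sum>k<N. t k x) \<longlonglongrightarrow> R^4 * lhs_integrand R x" if "x \<in> {0..}" for x
    using lhs_integrand_partial_fractions[OF R, of x] that unfolding t_def sums_def by simp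
  have dc: "(\<lambda>x. R^4 * lhs_integrand R x) integrable_on {0..}"
     "(\<lambda>N. integral {0..} (\<lambda>x. \<Sum>k<N. t k x)) \<longlonglongrightarrow> integral {0..} (\<lambda>x. R^4 * lhs_integrand R x)"
    by (rule dominated_convergence[OF _ hi bnd conv]; use fi in blast)+
  show "lhs_integrand R integrable_on {0..}"
    using integrable_on_mult_right[OF dc(1), of "1/R^4"] R by simp
  show "lhs_term R sums (R^4 * integral {0..} (lhs_integrand R))"
    using dc(2) unfolding integral_unique[OF fi] sums_def by simp
qed

lemma lhs_term_minus_limit_term:
  fixes R :: real and k :: nat
  defines "c \<equiv> 2*real k+1" and "E \<equiv> R^2*(2*real k+1)^2+4"
  shows "lhs_term R k - 4/c^3
       = 32*R^2*(integral {0..} (\<lambda>x. sin (pi*R*x)^2 / (c^2+4*x^2)) - pi/(8*c)) / (pi*E) - 16/(c^3*E)"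
proof -
  define a where "a = integral {0..} (\<lambda>x. sin (pi*R*x)^2 / (c^2+4*x^2)) - pi/(8*c)"
  have c: "c \<ge> 1" by (simp add: c_def)
  have E: "E > 0" by (simp add: E_def add_nonneg_pos)
  have "lhs_term R k = 32*R^2/(pi*E) * (a + pi/(8*c))"
    by (simp add: lhs_term_def a_def E_def c_def)
  also have "\<dots> = 32*R^2*a / (pi*E) + 4*R^2/(c*E)"
    using c E by (simp add: field_simps)
  finally have "lhs_term R k - 4/c^3 = 32*R^2*a / (pi*E) + (4*R^2/(c*E) - 4/c^3)"
    by simp
  also have "4*R^2/(c*E) - 4/c^3 = (4*R^2*c^2 - 4*E) / (c^3*E)"
    using c E by (simp add: field_simps power3_eq_cube power2_eq_square)
  also have "4*R^2*c^2 - 4*E = -16" by (simp add: E_def c_def)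
  finally show ?thesis by (simp add: a_def)
qed

lemma lhs_term_approx:
  fixes R :: real assumes R: "R \<ge> 1"
  shows "\<bar>lhs_term R k - 4/(2*real k+1)^3\<bar> \<le> 17/(R*(2*real k+1)^2)"
proof -
  define c where "c = 2*real k+1"
  define E where "E = R^2*c^2+4"
  define a where "a = integral {0..} (\<lambda>x. sin (pi*R*x)^2 / (c^2+4*x^2)) - pi/(8*c)"
  have c: "c \<ge> 1" by (simp add: c_def)
  have E: "E > 0" "R^2*c^2 \<le> E" by (simp_all add: E_def add_nonneg_pos)
  have a: "\<bar>a\<bar> \<le> 1/(4*pi*R*c^2)"
    unfolding a_def using sin_sq_div_sq_plus_integral(2)[of c R] c R by simp
  have split: "lhs_term R k - 4/c^3 = 32*R^2*a / (pi*E) - 16/(c^3*E)"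
    using lhs_term_minus_limit_term[of R k] by (simp add: a_def E_def c_def)
  have first: "\<bar>32*R^2*a / (pi*E)\<bar> \<le> 1/(R*c^2)"
  proof -
    have "\<bar>32*R^2*a / (pi*E)\<bar> = 32*R^2*\<bar>a\<bar> / (pi*E)"
      using E by (simp add: abs_mult abs_div)
    also have "\<dots> \<le> 32*R^2*(1/(4*pi*R*c^2)) / (pi*E)"
      using a E by (intro divide_right_mono mult_left_mono) auto
    also have "\<dots> = 8 / (pi^2 * c^2 * (E / R))"
      using c E R by (simp add: field_simps power2_eq_square)
    also have "\<dots> \<le> 8 / (pi^2 * c^2 * (R * c^2))"
      using c E R by (intro divide_left_mono mult_left_mono mult_pos_pos)
        (auto simp: field_simps power2_eq_square)
    also have "\<dots> \<le> 1/(R*c^2)"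
    proof -
      have "8 \<le> pi^2 * c^2"
        using nine_le_pi_sq mult_mono[of 9 "pi^2" 1 "c^2"] c by (simp add: one_le_power)
      thus ?thesis using c R by (simp add: divide_simps)
    qed
    finally show ?thesis .
  qed
  have second: "16/(c^3*E) \<le> 16/(R*c^2)"
  proof -
    have "1 * 1 \<le> R * c^3" using c R by (intro mult_mono) (auto simp: one_le_power)
    hence "R*c^2 * 1 \<le> R*c^2 * (R * c^3)" using R by (intro mult_left_mono) auto
    also have "\<dots> = c^3 * (R^2 * c^2)" by (simp add: power2_eq_square mult_ac)
    also have "\<dots> \<le> c^3 * E" using E c by (intro mult_left_mono) auto
    finally show ?thesis using c R E by (intro divide_left_mono mult_pos_pos) auto
  qed
  have "\<bar>32*R^2*a / (pi*E) - 16/(c^3*E)\<bar> \<le> \<bar>32*R^2*a / (pi*E)\<bar> + \<bar>16/(c^3*E)\<bar>"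
    by (rule abs_triangle_ineq4)
  also have "\<dots> \<le> 1/(R*c^2) + 16/(R*c^2)"
    using first second c E by (intro add_mono) auto
  also have "\<dots> = 17/(R*c^2)" by (simp add: add_divide_distrib)
  finally show ?thesis unfolding c_def[symmetric] split .
qed

lemma abs_le_of_sums:
  fixes f g :: "nat \<Rightarrow> real"
  assumes f: "f sums a" and g: "g sums b" and le: "\<And>n. \<bar>f n\<bar> \<le> g n"
  shows "\<bar>a\<bar> \<le> b"
proof -
  have "a \<le> b" using sums_le[OF _ f g] le abs_le_D1 by blast
  moreover have "- b \<le> a"
    by (rule sums_le[OF _ sums_minus[OF g] f]) (use abs_le_D2[OF le] in \<open>simp add: minus_le_iff\<close>)
  ultimately show ?thesis by linarith
qed

lemma tendsto_lhs_integral: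
  "((\<lambda>R. R^4 * integral {0..} (lhs_integrand R)) \<longlongrightarrow> 4 * (\<Sum>k. 1/(2*real k+1)^3)) at_top"
proof -
  define S3 where "S3 = (\<Sum>k. 1/(2*real k+1)^3)"
  define Q where "Q = (\<Sum>k. 1/(2*real k+1)^2)"
  have bnd: "\<bar>R^4 * integral {0..} (lhs_integrand R) - 4*S3\<bar> \<le> (17/R)*Q" if R: "R \<ge> 1" for R
  proof (rule abs_le_of_sums)
    show "(\<lambda>k. lhs_term R k - 4 * (1/(2*real k+1)^3)) sums (R^4 * integral {0..} (lhs_integrand R) - 4*S3)"
      unfolding S3_def using R
      by (intro sums_diff lhs_integrand_series(2) sums_mult summable_sums summable_inverse_odd_cube) simp
    show "(\<lambda>k. (17/R) * (1/(2*real k+1)^2)) sums ((17/R)*Q)"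
      unfolding Q_def by (intro sums_mult summable_sums summable_inverse_odd_sq)
    show "\<bar>lhs_term R k - 4 * (1/(2*real k+1)^3)\<bar> \<le> (17/R) * (1/(2*real k+1)^2)" for k
      using lhs_term_approx[OF R, of k] by simp
  qed
  have "((\<lambda>R. R^4 * integral {0..} (lhs_integrand R) - 4*S3) \<longlongrightarrow> 0) at_top"
  proof (rule Lim_null_comparison)
    show "\<forall>\<^sub>F R in at_top. norm (R^4 * integral {0..} (lhs_integrand R) - 4*S3) \<le> (17/R)*Q"
      using eventually_ge_at_top[of "1::real"] by eventually_elim (use bnd in simp)
    show "((\<lambda>R::real. (17/R)*Q) \<longlongrightarrow> 0) at_top" by real_asymp
  qed
  thus ?thesis unfolding S3_def by (simp add: Lim_null[symmetric])
qed

theorem mainTheorem14: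
  shows "(\<forall>R>0. lhs_integrand R integrable_on {0..}) \<and>
         rhs_integrand integrable_on {0..} \<and>
         ((\<lambda>R. R^4 * integral {0..} (lhs_integrand R))
            \<longlongrightarrow> pi^2 / 2 * integral {0..} rhs_integrand) at_top \<and>
         pi^2 / 2 * integral {0..} rhs_integrand > 4.20718"
proof -
  have rhs_value: "pi^2 / 2 * integral {0..} rhs_integrand = 4 * (\<Sum>k. 1/(2*real k+1)^3)"
    using integral_unique[OF rhs_integrand_has_integral] by simp
  show ?thesis
    unfolding rhs_value
    using lhs_integrand_series(1) rhs_integrand_has_integral tendsto_lhs_integral suminf_inverse_odd_cube_gt
    by auto
qed

end
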